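(* Let $\boldsymbol\mu\in\mathbb R^N$ with $\boldsymbol\mu\geq\mathbf 0$. There exists a power vector $\mathbf p^*\in\mathbb R^N$, $\mathbf p^*\geq\mathbf 0$, with $\Gamma(\mathbf p^* )=\boldsymbol\mu$ if and only if there exists a power vector $\mathbf p'\in\mathbb R^N$, $\mathbf p'\geq\mathbf 0$, with $\Gamma(\mathbf p')\geq\boldsymbol\mu$.
   Context: Multicast system: $N\geq 2$ transmitters $T_1,\dots,T_N$; transmitter $T_i$ has $K_i\geq 1$ receivers $R_i^{k}$, $k\in\mathcal K_i=\{1,\dots,K_i\}$. The channel gain from $T_j$ to $R_i^{k}$ is $g_{r_i^{k},t_j}\geq 0$, with direct gains $g_{r_i^{k},t_i}>0$; the noise variance is $\sigma^2>0$. For $\mathbf p=(p_1,\dots,p_N)^T\geq\mathbf 0$ the SINR of $R_i^k$ is $\gamma_i^{k}(\mathbf p)=\frac{g_{r_i^{k},t_i}p_i}{\sum_{j\neq i}g_{r_i^{k},t_j}p_j+\sigma^2}$, the SINR of session $i$ is $\gamma_i(\mathbf p)=\min_{k\in\mathcal K_i}\gamma_i^{k}(\mathbf p)$, and $\Gamma(\mathbf p)=(\gamma_1(\mathbf p),\dots,\gamma_N(\mathbf p))$. Vector inequalities are componentwise. *)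

theory Defs
  imports Complex_Main
begin

(* Transmitters are indexed by i \<in> {0..<N}; transmitter i has receivers k \<in> {0..<K i}.
   g i k j is the channel gain from transmitter j to receiver k of transmitter i.
   Power vectors are functions p :: nat \<Rightarrow> real, only the entries p j, j < N, matter. *)

definition sinr_rx ::
  "nat \<Rightarrow> (nat \<Rightarrow> nat \<Rightarrow> nat \<Rightarrow> real) \<Rightarrow> real \<Rightarrow> (nat \<Rightarrow> real) \<Rightarrow> nat \<Rightarrow> nat \<Rightarrow> real" where
  "sinr_rx N g \<sigma>2 p i k =
     g i k i * p i / ((\<Sum>j\<in>{0..<N} - {i}. g i k j * p j) + \<sigma>2)"

definition sinr_session ::
  "nat \<Rightarrow> (nat \<Rightarrow> nat) \<Rightarrow> (nat \<Rightarrow> nat \<Rightarrow> nat \<Rightarrow> real) \<Rightarrow> real \<Rightarrow> (nat \<Rightarrow> real) \<Rightarrow> nat \<Rightarrow> real" where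
  "sinr_session N K g \<sigma>2 p i = Min ((\<lambda>k. sinr_rx N g \<sigma>2 p i k) ` {0..<K i})"

end

theory Submission
  imports Defs
begin

text \<open>Write the SINR of session \<open>i\<close> as \<open>p\<^sub>i / M\<^sub>i(p)\<close>, where \<open>M\<^sub>i(p)\<close> is the largest ratio
  of interference-plus-noise to direct gain over the receivers of \<open>T\<^sub>i\<close>. The map \<open>M\<close> is positive
  and monotone, so \<open>\<Gamma>(p) \<ge> \<mu>\<close> says that \<open>p\<close> is a supersolution \<open>\<mu> M(p) \<le> p\<close> of a monotone
  fixed-point equation. As in the Knaster--Tarski theorem, the componentwise infimum of all
  supersolutions between \<open>0\<close> and a given one is a fixed point \<open>p = \<mu> M(p)\<close>, i.e. \<open>\<Gamma>(p) = \<mu>\<close>.\<close>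

lemma fixed_point_below_supersolution:
  fixes T :: "(nat \<Rightarrow> real) \<Rightarrow> nat \<Rightarrow> real"
  assumes mono: "\<And>p q i. (\<And>j. j < N \<Longrightarrow> 0 \<le> p j) \<Longrightarrow> (\<And>j. j < N \<Longrightarrow> p j \<le> q j) \<Longrightarrow> i < N
      \<Longrightarrow> T p i \<le> T q i"
    and nonneg: "\<And>p i. (\<And>j. j < N \<Longrightarrow> 0 \<le> p j) \<Longrightarrow> i < N \<Longrightarrow> 0 \<le> T p i"
    and u_nonneg: "\<And>j. j < N \<Longrightarrow> 0 \<le> u j"
    and u_super: "\<And>i. i < N \<Longrightarrow> T u i \<le> u i"
  shows "\<exists>p. (\<forall>j<N. 0 \<le> p j \<and> p j \<le> u j) \<and> (\<forall>i<N. T p i = p i)"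
proof -
  define S where "S = {q. (\<forall>j<N. 0 \<le> q j \<and> q j \<le> u j) \<and> (\<forall>i<N. T q i \<le> q i)}"
  define p where "p j = Inf ((\<lambda>q. q j) ` S)" for j
  have "u \<in> S"
    unfolding S_def using u_nonneg u_super by auto
  have p_le: "p j \<le> q j" if "j < N" "q \<in> S" for j q
    unfolding p_def using that by (intro cInf_lower bdd_belowI[of _ 0]) (auto simp: S_def)
  have p_ge: "c \<le> p j" if "\<And>q. q \<in> S \<Longrightarrow> c \<le> q j" for c j
    unfolding p_def using \<open>u \<in> S\<close> that by (intro cInf_greatest) auto
  have p_nonneg: "0 \<le> p j" if "j < N" for j
    using that by (intro p_ge) (auto simp: S_def)
  have p_super: "T p i \<le> p i" if "i < N" for i
  proof (rule p_ge)
    fix q assume "q \<in> S"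
    with that have "T p i \<le> T q i"
      by (intro mono p_nonneg p_le) auto
    also have "\<dots> \<le> q i"
      using \<open>q \<in> S\<close> that by (auto simp: S_def)
    finally show "T p i \<le> q i" .
  qed
  text \<open>Monotonicity makes \<open>T p\<close> a supersolution again, so minimality of \<open>p\<close> gives \<open>p \<le> T p\<close>.\<close>
  have "T p \<in> S"
    unfolding S_def
  proof (intro CollectI conjI allI impI)
    fix j assume "j < N"
    show "0 \<le> T p j"
      using \<open>j < N\<close> by (intro nonneg p_nonneg)
    show "T p j \<le> u j"
      using p_super[OF \<open>j < N\<close>] p_le[OF \<open>j < N\<close> \<open>u \<in> S\<close>] by linarith
    show "T (T p) j \<le> T p j"
      using \<open>j < N\<close> by (intro mono nonneg p_nonneg p_super)
  qed
  then have "\<forall>i<N. T p i = p i"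
    using p_le p_super by (simp add: order_antisym)
  moreover have "\<forall>j<N. 0 \<le> p j \<and> p j \<le> u j"
    using p_nonneg p_le \<open>u \<in> S\<close> by blast
  ultimately show ?thesis
    by blast
qed

definition max_interference_ratio ::
  "nat \<Rightarrow> (nat \<Rightarrow> nat) \<Rightarrow> (nat \<Rightarrow> nat \<Rightarrow> nat \<Rightarrow> real) \<Rightarrow> real \<Rightarrow> (nat \<Rightarrow> real) \<Rightarrow> nat \<Rightarrow> real" where
  "max_interference_ratio N K g \<sigma>2 p i =
     Max ((\<lambda>k. ((\<Sum>j\<in>{0..<N} - {i}. g i k j * p j) + \<sigma>2) / g i k i) ` {0..<K i})"

lemma interference_ratio_pos:
  fixes g :: "nat \<Rightarrow> nat \<Rightarrow> nat \<Rightarrow> real"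
  assumes "\<forall>j<N. g i k j \<ge> 0" "g i k i > 0" "\<sigma>2 > 0" "\<forall>j<N. p j \<ge> 0"
  shows "((\<Sum>j\<in>{0..<N} - {i}. g i k j * p j) + \<sigma>2) / g i k i > 0"
proof -
  have "(\<Sum>j\<in>{0..<N} - {i}. g i k j * p j) \<ge> 0"
    using assms(1,4) by (intro sum_nonneg) auto
  with assms(2,3) show ?thesis
    by auto
qed

lemma max_interference_ratio_ge:
  "k < K i \<Longrightarrow> ((\<Sum>j\<in>{0..<N} - {i}. g i k j * p j) + \<sigma>2) / g i k i
     \<le> max_interference_ratio N K g \<sigma>2 p i"
  unfolding max_interference_ratio_def by (intro Max_ge) auto

lemma max_interference_ratio_pos:
  assumes "K i \<ge> 1" "\<forall>k<K i. \<forall>j<N. g i k j \<ge> 0" "\<forall>k<K i. g i k i > 0" "\<sigma>2 > 0"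
    "\<forall>j<N. p j \<ge> 0"
  shows "max_interference_ratio N K g \<sigma>2 p i > 0"
proof -
  have "0 < ((\<Sum>j\<in>{0..<N} - {i}. g i 0 j * p j) + \<sigma>2) / g i 0 i"
    using assms by (intro interference_ratio_pos) auto
  also have "\<dots> \<le> max_interference_ratio N K g \<sigma>2 p i"
    using assms(1) by (intro max_interference_ratio_ge) simp
  finally show ?thesis .
qed

lemma max_interference_ratio_mono:
  assumes "K i \<ge> 1" "\<forall>k<K i. \<forall>j<N. g i k j \<ge> 0" "\<forall>k<K i. g i k i > 0"
    "\<forall>j<N. p j \<le> q j"
  shows "max_interference_ratio N K g \<sigma>2 p i \<le> max_interference_ratio N K g \<sigma>2 q i"
proof -
  have "((\<Sum>j\<in>{0..<N} - {i}. g i k j * p j) + \<sigma>2) / g i k i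
      \<le> max_interference_ratio N K g \<sigma>2 q i" if "k < K i" for k
  proof -
    have "(\<Sum>j\<in>{0..<N} - {i}. g i k j * p j) \<le> (\<Sum>j\<in>{0..<N} - {i}. g i k j * q j)"
      using assms(2,4) that by (intro sum_mono mult_left_mono) auto
    then have "((\<Sum>j\<in>{0..<N} - {i}. g i k j * p j) + \<sigma>2) / g i k i
        \<le> ((\<Sum>j\<in>{0..<N} - {i}. g i k j * q j) + \<sigma>2) / g i k i"
      using assms(3) that by (intro divide_right_mono) auto
    also have "\<dots> \<le> max_interference_ratio N K g \<sigma>2 q i"
      using that by (rule max_interference_ratio_ge)
    finally show ?thesis .
  qed
  then show ?thesis
    using assms(1) unfolding max_interference_ratio_def[of N K g \<sigma>2 p]
    by (intro Max.boundedI) auto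
qed

lemma sinr_session_eq_div_max_interference_ratio:
  assumes "K i \<ge> 1" "\<forall>k<K i. \<forall>j<N. g i k j \<ge> 0" "\<forall>k<K i. g i k i > 0" "\<sigma>2 > 0"
    "\<forall>j<N. p j \<ge> 0" "i < N"
  shows "sinr_session N K g \<sigma>2 p i = p i / max_interference_ratio N K g \<sigma>2 p i"
proof -
  let ?h = "\<lambda>k. ((\<Sum>j\<in>{0..<N} - {i}. g i k j * p j) + \<sigma>2) / g i k i"
  let ?M = "max_interference_ratio N K g \<sigma>2 p i"
  have sinr_rx_eq: "sinr_rx N g \<sigma>2 p i k = p i / ?h k" if "k < K i" for k
    unfolding sinr_rx_def using assms(3) that by simp
  have "?M \<in> ?h ` {0..<K i}"
    unfolding max_interference_ratio_def using assms(1) by (intro Max_in) auto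
  then obtain k0 where "k0 < K i" "?M = ?h k0"
    by auto
  show ?thesis
    unfolding sinr_session_def
  proof (rule Min_eqI)
    show "p i / ?M \<in> (\<lambda>k. sinr_rx N g \<sigma>2 p i k) ` {0..<K i}"
      using \<open>k0 < K i\<close> \<open>?M = ?h k0\<close> sinr_rx_eq by force
  next
    fix y assume "y \<in> (\<lambda>k. sinr_rx N g \<sigma>2 p i k) ` {0..<K i}"
    then obtain k where "k < K i" "y = sinr_rx N g \<sigma>2 p i k"
      by auto
    have "0 < ?h k"
      using assms \<open>k < K i\<close> by (intro interference_ratio_pos) auto
    moreover have "?h k \<le> ?M"
      using \<open>k < K i\<close> by (rule max_interference_ratio_ge)
    ultimately have "p i / ?M \<le> p i / ?h k"
      using assms(5,6) by (intro divide_left_mono mult_pos_pos) auto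
    then show "p i / ?M \<le> y"
      using \<open>k < K i\<close> \<open>y = sinr_rx N g \<sigma>2 p i k\<close> sinr_rx_eq by simp
  qed simp
qed

lemma le_sinr_session_iff:
  assumes "K i \<ge> 1" "\<forall>k<K i. \<forall>j<N. g i k j \<ge> 0" "\<forall>k<K i. g i k i > 0" "\<sigma>2 > 0"
    "\<forall>j<N. p j \<ge> 0" "i < N"
  shows "c \<le> sinr_session N K g \<sigma>2 p i \<longleftrightarrow> c * max_interference_ratio N K g \<sigma>2 p i \<le> p i"
proof -
  have "sinr_session N K g \<sigma>2 p i = p i / max_interference_ratio N K g \<sigma>2 p i"
    using assms by (rule sinr_session_eq_div_max_interference_ratio)
  moreover have "0 < max_interference_ratio N K g \<sigma>2 p i"
    using assms by (intro max_interference_ratio_pos)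
  ultimately show ?thesis
    by (simp add: pos_le_divide_eq)
qed

lemma sinr_session_eq_iff:
  assumes "K i \<ge> 1" "\<forall>k<K i. \<forall>j<N. g i k j \<ge> 0" "\<forall>k<K i. g i k i > 0" "\<sigma>2 > 0"
    "\<forall>j<N. p j \<ge> 0" "i < N"
  shows "sinr_session N K g \<sigma>2 p i = c \<longleftrightarrow> c * max_interference_ratio N K g \<sigma>2 p i = p i"
proof -
  have "sinr_session N K g \<sigma>2 p i = p i / max_interference_ratio N K g \<sigma>2 p i"
    using assms by (rule sinr_session_eq_div_max_interference_ratio)
  moreover have "0 < max_interference_ratio N K g \<sigma>2 p i"
    using assms by (intro max_interference_ratio_pos)
  ultimately show ?thesis
    by (auto simp: divide_eq_eq)
qed

theorem proposition1:
  fixes N :: nat and K :: "nat \<Rightarrow> nat" and g :: "nat \<Rightarrow> nat \<Rightarrow> nat \<Rightarrow> real"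
    and \<sigma>2 :: real and \<mu> :: "nat \<Rightarrow> real"
  assumes N2: "N \<ge> 2"
    and K1: "\<forall>i<N. K i \<ge> 1"
    and g_nonneg: "\<forall>i<N. \<forall>k<K i. \<forall>j<N. g i k j \<ge> 0"
    and g_direct: "\<forall>i<N. \<forall>k<K i. g i k i > 0"
    and sigma_pos: "\<sigma>2 > 0"
    and mu_nonneg: "\<forall>i<N. \<mu> i \<ge> 0"
  shows "(\<exists>p::nat \<Rightarrow> real. (\<forall>i<N. p i \<ge> 0) \<and> (\<forall>i<N. sinr_session N K g \<sigma>2 p i = \<mu> i))
     \<longleftrightarrow> (\<exists>p::nat \<Rightarrow> real. (\<forall>i<N. p i \<ge> 0) \<and> (\<forall>i<N. sinr_session N K g \<sigma>2 p i \<ge> \<mu> i))"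
proof
  assume "\<exists>p. (\<forall>i<N. p i \<ge> 0) \<and> (\<forall>i<N. sinr_session N K g \<sigma>2 p i = \<mu> i)"
  then show "\<exists>p. (\<forall>i<N. p i \<ge> 0) \<and> (\<forall>i<N. sinr_session N K g \<sigma>2 p i \<ge> \<mu> i)"
    by (metis order_refl)
next
  let ?M = "max_interference_ratio N K g \<sigma>2"
  assume "\<exists>p. (\<forall>i<N. p i \<ge> 0) \<and> (\<forall>i<N. sinr_session N K g \<sigma>2 p i \<ge> \<mu> i)"
  then obtain u where u_nonneg: "\<forall>i<N. u i \<ge> 0" and u_sinr: "\<forall>i<N. sinr_session N K g \<sigma>2 u i \<ge> \<mu> i"
    by blast
  have "\<exists>p. (\<forall>j<N. 0 \<le> p j \<and> p j \<le> u j) \<and> (\<forall>i<N. \<mu> i * ?M p i = p i)"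
  proof (rule fixed_point_below_supersolution)
    show "\<mu> i * ?M p i \<le> \<mu> i * ?M q i"
      if "\<And>j. j < N \<Longrightarrow> 0 \<le> p j" "\<And>j. j < N \<Longrightarrow> p j \<le> q j" "i < N" for p q i
      using K1 g_nonneg g_direct mu_nonneg that
      by (intro mult_left_mono max_interference_ratio_mono) auto
    show "0 \<le> \<mu> i * ?M p i" if "\<And>j. j < N \<Longrightarrow> 0 \<le> p j" "i < N" for p i
      using K1 g_nonneg g_direct sigma_pos mu_nonneg that
      by (intro mult_nonneg_nonneg less_imp_le[OF max_interference_ratio_pos]) auto
    show "\<mu> i * ?M u i \<le> u i" if "i < N" for i
      using K1 g_nonneg g_direct sigma_pos u_nonneg u_sinr that
      by (subst le_sinr_session_iff[symmetric]) auto
    show "0 \<le> u j" if "j < N" for j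
      using u_nonneg that by blast
  qed
  then obtain p where p_nonneg: "\<forall>j<N. 0 \<le> p j" and p_fixed: "\<forall>i<N. \<mu> i * ?M p i = p i"
    by blast
  have "sinr_session N K g \<sigma>2 p i = \<mu> i" if "i < N" for i
    using K1 g_nonneg g_direct sigma_pos p_nonneg p_fixed that
    by (subst sinr_session_eq_iff) auto
  with p_nonneg show "\<exists>p. (\<forall>i<N. p i \<ge> 0) \<and> (\<forall>i<N. sinr_session N K g \<sigma>2 p i = \<mu> i)"
    by blast
qed

end
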